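(* Let $(\Omega,\mathcal A)$ be a Borel space, $(\Omega,X_\bullet)$ a Borel field of metric spaces, and $U_\bullet$ a subfield such that $U_\omega$ is open in $X_\omega$ for every $\omega$. If there is a fundamental family $\mathcal D$ of $\mathcal L(\Omega,X_\bullet)$ such that $\{\omega\in\Omega\mid x_\omega\in U_\omega\}\in\mathcal A$ for every $x_\bullet\in\mathcal D$, then $U_\bullet$ is a Borel subfield.
   Context: Borel field of metric spaces: $(X_\omega,d_\omega)_{\omega\in\Omega}$ metric spaces; a section is $x_\bullet=(x_\omega)$, $x_\omega\in X_\omega$. A Borel structure is a set $\mathcal L(\Omega,X_\bullet)$ of sections such that (a) $\omega\mapsto d_\omega(x_\omega,y_\omega)$ is Borel for all $x_\bullet,y_\bullet\in\mathcal L$; (b) any section $y_\bullet$ with $\omega\mapsto d_\omega(x_\omega,y_\omega)$ Borel for all $x_\bullet\in\mathcal L$ lies in $\mathcal L$; (c) there is a countable $\mathcal D=\{x^n_\bullet\}\subseteq\mathcal L$ (fundamental family) with $\{x^n_\omega\}_n$ dense in $X_\omega$ for all $\omega$. For Borel $\Omega'$, $\mathcal L(\Omega',X_\bullet)$ = restrictions to $\Omega'$ of Borel sections. A subfield is $A_\bullet=(A_\omega)$ with $A_\omega\subseteq X_\omega$ (possibly empty); it is Borel if $\Omega'=\{\omega:A_\omega\ne\emptyset\}\in\mathcal A$ and there are countably many $y^n_\bullet\in\mathcal L(\Omega',X_\bullet)$ with $y^n_\omega\in A_\omega$ and $A_\omega\subseteq\overline{\{y^n_\omega\}_n}$ for all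 $\omega\in\Omega'$. *)

theory Defs
  imports "HOL-Analysis.Analysis"
begin

definition is_section :: "'w measure \<Rightarrow> ('w \<Rightarrow> 'x metric) \<Rightarrow> ('w \<Rightarrow> 'x) \<Rightarrow> bool" where
  "is_section M X s \<longleftrightarrow> (\<forall>\<omega>\<in>space M. s \<omega> \<in> mspace (X \<omega>))"

definition dist_fun :: "('w \<Rightarrow> 'x metric) \<Rightarrow> ('w \<Rightarrow> 'x) \<Rightarrow> ('w \<Rightarrow> 'x) \<Rightarrow> 'w \<Rightarrow> real" where
  "dist_fun X x y = (\<lambda>\<omega>. mdist (X \<omega>) (x \<omega>) (y \<omega>))"

definition fundamental_family ::
  "'w measure \<Rightarrow> ('w \<Rightarrow> 'x metric) \<Rightarrow> ('w \<Rightarrow> 'x) set \<Rightarrow> ('w \<Rightarrow> 'x) set \<Rightarrow> bool" where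
  "fundamental_family M X L D \<longleftrightarrow> countable D \<and> D \<subseteq> L \<and>
     (\<forall>\<omega>\<in>space M. mtopology_of (X \<omega>) closure_of {x \<omega> | x. x \<in> D} = mspace (X \<omega>))"

definition borel_structure ::
  "'w measure \<Rightarrow> ('w \<Rightarrow> 'x metric) \<Rightarrow> ('w \<Rightarrow> 'x) set \<Rightarrow> bool" where
  "borel_structure M X L \<longleftrightarrow>
     (\<forall>x\<in>L. is_section M X x) \<and>
     (\<forall>x\<in>L. \<forall>y\<in>L. dist_fun X x y \<in> borel_measurable M) \<and>
     (\<forall>y. is_section M X y \<and> (\<forall>x\<in>L. dist_fun X x y \<in> borel_measurable M) \<longrightarrow> y \<in> L) \<and>
     (\<exists>D. fundamental_family M X L D)"

definition restricted_sections ::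
  "('w \<Rightarrow> 'x) set \<Rightarrow> 'w set \<Rightarrow> ('w \<Rightarrow> 'x) set" where
  "restricted_sections L \<Omega>' = {y. \<exists>z\<in>L. \<forall>\<omega>\<in>\<Omega>'. y \<omega> = z \<omega>}"

definition borel_subfield ::
  "'w measure \<Rightarrow> ('w \<Rightarrow> 'x metric) \<Rightarrow> ('w \<Rightarrow> 'x) set \<Rightarrow> ('w \<Rightarrow> 'x set) \<Rightarrow> bool" where
  "borel_subfield M X L A \<longleftrightarrow>
     (let \<Omega>' = {\<omega>\<in>space M. A \<omega> \<noteq> {}} in
       \<Omega>' \<in> sets M \<and>
       (\<exists>Y. countable Y \<and> Y \<subseteq> restricted_sections L \<Omega>' \<and>
          (\<forall>y\<in>Y. \<forall>\<omega>\<in>\<Omega>'. y \<omega> \<in> A \<omega>) \<and>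
          (\<forall>\<omega>\<in>\<Omega>'. A \<omega> \<subseteq> mtopology_of (X \<omega>) closure_of {y \<omega> | y. y \<in> Y})))"

end

theory Submission
  imports Defs
begin

(* Enumerate the fundamental family D as x_0, x_1, ....  Since every U_w is
   open and {x_m w} is dense in X_w, the fibre U_w is nonempty iff some x_m w lies in it, so
   Omega' = {w. U_w ~= {}} is the countable union of the measurable sets {w. x_m w : U_w}.
   For every n let z_n be x_n where x_n w : U_w, and otherwise x_m for the first index m with
   x_m w : U_w.  The index chosen depends measurably on w, and a Borel structure is closed under
   gluing countably many Borel sections along a measurable index (a consequence of the
   maximality axiom (b)); hence every z_n is a Borel section.  On Omega' the values z_n w lie in
   U_w and contain every x_m w that lies in U_w; the latter set is dense in the open set U_w,
   so the countable family of the z_n witnesses that U is a Borel subfield. *)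

lemma openin_subset_closure_of_dense_Int:
  assumes "openin X S" and "X closure_of T = topspace X"
  shows "S \<subseteq> X closure_of (S \<inter> T)"
proof -
  have "S \<subseteq> X closure_of T"
    using openin_subset[OF assms(1)] assms(2) by simp
  then have "X closure_of (S \<inter> T) = X closure_of S"
    using assms(1) by (simp add: closure_of_openin_Int_superset)
  then show ?thesis
    using openin_subset[OF assms(1)] closure_of_subset by metis
qed

text \<open>Gluing: a Borel structure contains every section obtained by choosing, measurably in
  \<open>\<omega>\<close>, one of countably many Borel sections.  Its distance to any Borel section is a
  countable measurable gluing of measurable functions, so the maximality axiom applies.\<close>

lemma borel_structure_glue:
  fixes xs :: "'i \<Rightarrow> 'w \<Rightarrow> 'x"
  assumes L: "borel_structure M X L"
    and I: "countable I" and xs: "\<And>i. i \<in> I \<Longrightarrow> xs i \<in> L"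
    and k: "k \<in> measurable M (count_space I)"
  shows "(\<lambda>\<omega>. xs (k \<omega>) \<omega>) \<in> L"
proof -
  have sections: "\<forall>x\<in>L. is_section M X x"
    and dist_meas: "\<forall>x\<in>L. \<forall>y\<in>L. dist_fun X x y \<in> borel_measurable M"
    and maximal: "\<And>y. is_section M X y \<Longrightarrow> (\<forall>x\<in>L. dist_fun X x y \<in> borel_measurable M) \<Longrightarrow> y \<in> L"
    using L unfolding borel_structure_def by blast+
  have k_in: "k \<omega> \<in> I" if "\<omega> \<in> space M" for \<omega>
    using measurable_space[OF k that] by simp
  show ?thesis
  proof (rule maximal)
    show "is_section M X (\<lambda>\<omega>. xs (k \<omega>) \<omega>)"
      using sections xs k_in unfolding is_section_def by blast
    show "\<forall>x\<in>L. dist_fun X x (\<lambda>\<omega>. xs (k \<omega>) \<omega>) \<in> borel_measurable M"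
    proof
      fix x assume "x \<in> L"
      have "(\<lambda>\<omega>. dist_fun X x (xs (k \<omega>)) \<omega>) \<in> borel_measurable M"
        by (rule measurable_compose_countable'[OF _ k I]) (use dist_meas \<open>x \<in> L\<close> xs in blast)
      then show "dist_fun X x (\<lambda>\<omega>. xs (k \<omega>) \<omega>) \<in> borel_measurable M"
        by (simp add: dist_fun_def)
    qed
  qed
qed

definition first_hit :: "(nat \<Rightarrow> 'w \<Rightarrow> bool) \<Rightarrow> nat \<Rightarrow> 'w \<Rightarrow> nat" where
  "first_hit P n \<omega> = (if P n \<omega> then n else LEAST m. P m \<omega>)"

lemma first_hit_hits:
  assumes "\<exists>m. P m \<omega>"
  shows "P (first_hit P n \<omega>) \<omega>"
  using assms LeastI_ex[of "\<lambda>m. P m \<omega>"] unfolding first_hit_def by auto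

lemma first_hit_self: "P n \<omega> \<Longrightarrow> first_hit P n \<omega> = n"
  by (simp add: first_hit_def)

lemma measurable_first_hit:
  assumes "\<And>m. {\<omega>\<in>space M. P m \<omega>} \<in> sets M"
  shows "first_hit P n \<in> measurable M (count_space UNIV)"
  unfolding first_hit_def
proof (rule measurable_If)
  show "(\<lambda>\<omega>. LEAST m. P m \<omega>) \<in> measurable M (count_space UNIV)"
    by (rule measurable_Least) (use assms in \<open>simp add: pred_def\<close>)
qed (use assms in auto)

lemma borel_subfield_of_dense_sequence:
  fixes xs :: "nat \<Rightarrow> 'w \<Rightarrow> 'x"
  assumes L: "borel_structure M X L"
    and xs_L: "\<And>m. xs m \<in> L"
    and dense: "\<And>\<omega>. \<omega> \<in> space M \<Longrightarrow>
                  mtopology_of (X \<omega>) closure_of range (\<lambda>m. xs m \<omega>) = mspace (X \<omega>)"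
    and U_open: "\<And>\<omega>. \<omega> \<in> space M \<Longrightarrow> openin (mtopology_of (X \<omega>)) (U \<omega>)"
    and hit_meas: "\<And>m. {\<omega>\<in>space M. xs m \<omega> \<in> U \<omega>} \<in> sets M"
  shows "borel_subfield M X L U"
proof -
  define \<Omega>' where "\<Omega>' = {\<omega>\<in>space M. U \<omega> \<noteq> {}}"
  define hit where "hit m \<omega> \<longleftrightarrow> xs m \<omega> \<in> U \<omega>" for m \<omega>
  define z where "z n \<omega> = xs (first_hit hit n \<omega>) \<omega>" for n \<omega>
  have U_trace_dense: "U \<omega> \<subseteq> mtopology_of (X \<omega>) closure_of (U \<omega> \<inter> range (\<lambda>m. xs m \<omega>))"
    if "\<omega> \<in> space M" for \<omega>
    using openin_subset_closure_of_dense_Int[OF U_open[OF that], of "range (\<lambda>m. xs m \<omega>)"]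
      dense[OF that] by simp
  have nonempty_iff_hit: "U \<omega> \<noteq> {} \<longleftrightarrow> (\<exists>m. hit m \<omega>)" if "\<omega> \<in> space M" for \<omega>
  proof
    assume "U \<omega> \<noteq> {}"
    then have "U \<omega> \<inter> range (\<lambda>m. xs m \<omega>) \<noteq> {}"
      using U_trace_dense[OF that] by (metis closure_of_empty subset_empty)
    then show "\<exists>m. hit m \<omega>"
      by (auto simp: hit_def)
  qed (auto simp: hit_def)
  have "\<Omega>' = (\<Union>m. {\<omega>\<in>space M. xs m \<omega> \<in> U \<omega>})"
    unfolding \<Omega>'_def using nonempty_iff_hit by (auto simp: hit_def)
  then have \<Omega>'_meas: "\<Omega>' \<in> sets M"
    using hit_meas by auto
  have z_L: "z n \<in> L" for n
    unfolding z_def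
    by (rule borel_structure_glue[OF L _ xs_L measurable_first_hit])
       (simp_all add: hit_def hit_meas)
  have z_U: "z n \<omega> \<in> U \<omega>" if "\<omega> \<in> \<Omega>'" for n \<omega>
    using first_hit_hits[of hit \<omega> n] nonempty_iff_hit that
    unfolding \<Omega>'_def z_def hit_def by auto
  have z_dense: "U \<omega> \<subseteq> mtopology_of (X \<omega>) closure_of {y \<omega> | y. y \<in> range z}"
    if "\<omega> \<in> space M" for \<omega>
  proof -
    have "U \<omega> \<inter> range (\<lambda>m. xs m \<omega>) \<subseteq> {y \<omega> | y. y \<in> range z}"
    proof
      fix u assume "u \<in> U \<omega> \<inter> range (\<lambda>m. xs m \<omega>)"
      then obtain m where "u = xs m \<omega>" and "hit m \<omega>"
        by (auto simp: hit_def)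
      then have "u = z m \<omega>"
        using first_hit_self[of hit m \<omega>] by (simp add: z_def)
      then show "u \<in> {y \<omega> | y. y \<in> range z}"
        by blast
    qed
    then show ?thesis
      using U_trace_dense[OF that] closure_of_mono by blast
  qed
  show ?thesis
    unfolding borel_subfield_def Let_def \<Omega>'_def[symmetric]
  proof (intro conjI \<Omega>'_meas exI[of _ "range z"])
    show "range z \<subseteq> restricted_sections L \<Omega>'"
      unfolding restricted_sections_def using z_L by blast
    show "\<forall>y\<in>range z. \<forall>\<omega>\<in>\<Omega>'. y \<omega> \<in> U \<omega>"
      using z_U by blast
    show "\<forall>\<omega>\<in>\<Omega>'. U \<omega> \<subseteq> mtopology_of (X \<omega>) closure_of {y \<omega> | y. y \<in> range z}"
      using z_dense unfolding \<Omega>'_def by blast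
  qed simp
qed

lemma borel_subfield_empty:
  assumes "\<forall>\<omega>\<in>space M. U \<omega> = {}"
  shows "borel_subfield M X L U"
proof -
  have no_support: "{\<omega>\<in>space M. U \<omega> \<noteq> {}} = {}"
    using assms by auto
  show ?thesis
    unfolding borel_subfield_def Let_def no_support by auto
qed

theorem mainTheorem4:
  fixes M :: "'w measure" and X :: "'w \<Rightarrow> 'x metric"
    and L :: "('w \<Rightarrow> 'x) set" and U :: "'w \<Rightarrow> 'x set"
  assumes "borel_structure M X L"
    and "\<forall>\<omega>\<in>space M. U \<omega> \<subseteq> mspace (X \<omega>)"
    and "\<forall>\<omega>\<in>space M. openin (mtopology_of (X \<omega>)) (U \<omega>)"
    and "\<exists>D. fundamental_family M X L D \<and>
           (\<forall>x\<in>D. {\<omega>\<in>space M. x \<omega> \<in> U \<omega>} \<in> sets M)"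
  shows "borel_subfield M X L U"
proof -
  obtain D where D: "fundamental_family M X L D"
    and hit_meas: "\<forall>x\<in>D. {\<omega>\<in>space M. x \<omega> \<in> U \<omega>} \<in> sets M"
    using assms(4) by blast
  have "countable D" and "D \<subseteq> L"
    and dense: "\<forall>\<omega>\<in>space M. mtopology_of (X \<omega>) closure_of {x \<omega> | x. x \<in> D} = mspace (X \<omega>)"
    using D unfolding fundamental_family_def by blast+
  show ?thesis
  proof (cases "D = {}")
    case True
    then show ?thesis
      using dense assms(2) by (intro borel_subfield_empty) auto
  next
    case False
    define xs where "xs = from_nat_into D"
    have range_xs: "range xs = D"
      unfolding xs_def using False \<open>countable D\<close> by (simp add: range_from_nat_into)
    then have "{x \<omega> | x. x \<in> D} = range (\<lambda>m. xs m \<omega>)" for \<omega>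
      by auto
    then show ?thesis
      using range_xs \<open>D \<subseteq> L\<close> dense hit_meas assms(1,3)
      by (intro borel_subfield_of_dense_sequence[where xs = xs]) auto
  qed
qed

end
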